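(* Let $m\ge 2$ be a non-prime integer and $n=2^m-1$. Then there is no monomial power permutation $F(x)=x^t$ of $GF(2^m)$ for which the self-embedding $S\cup F(S)$ lies in a closed surface, where $S=STS(\mathcal H^n)$.
   Context: A monomial power permutation is $F(x)=x^t$ with $\gcd(t,n)=1$. $S=STS(\mathcal H^n)$ is the set of 3-subsets $\{a,b,c\}$ of nonzero elements of $GF(2^m)$ with $a+b+c=0$; $F(S)=\{\{F(a),F(b),F(c)\}:\{a,b,c\}\in S\}$. For nonzero $a$, let $P_a=GF(2^m)\setminus\{0,a\}$, $s_a(y)=a+y$, $\psi_a(y)=F(F^{-1}(a)+F^{-1}(y))$; the rotation lines at $a$ are the orbits on $P_a$ of the group generated by $s_a,\psi_a$, and $rl(a)$ is their number. $S\cup F(S)$ lies in a closed surface iff $rl(a)=1$ for all nonzero $a$ (equivalently: for every nonzero $a$ and every $a_1\in P_a$, the elements $a_1,\dots,a_{2^{m-1}-1}$ with $a_{i+1}=F(F^{-1}(a)+F^{-1}(a+a_i))$ are pairwise distinct). *)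

theory Defs
  imports "HOL-Computational_Algebra.Primes"
begin

text \<open>GF(2^m) is modelled by an arbitrary finite field type of cardinality 2^m
 (unique up to isomorphism). F is a permutation; F^{-1} is inv F.\<close>

definition punct :: "'a::field \<Rightarrow> 'a set" where
  "punct a = UNIV - {0, a}"

definition rot_step :: "('a::field \<Rightarrow> 'a) \<Rightarrow> 'a \<Rightarrow> ('a \<times> 'a) set" where
  "rot_step F a = {(y, a + y) | y. y \<in> punct a}
                 \<union> {(y, F (inv F a + inv F y)) | y. y \<in> punct a}"

text \<open>Rotation lines at a: orbits on P_a of the group generated by s_a, psi_a
 (both are involutions of P_a, so orbits are the classes of the reflexive
 transitive closure of the step relation).\<close>
definition rotation_lines :: "('a::field \<Rightarrow> 'a) \<Rightarrow> 'a \<Rightarrow> 'a set set" where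
  "rotation_lines F a = punct a // ((rot_step F a)\<^sup>*)"

definition rl :: "('a::field \<Rightarrow> 'a) \<Rightarrow> 'a \<Rightarrow> nat" where
  "rl F a = card (rotation_lines F a)"

text \<open>S \<union> F(S) lies in a closed surface iff rl(a) = 1 for all nonzero a.\<close>
definition in_closed_surface :: "('a::field \<Rightarrow> 'a) \<Rightarrow> bool" where
  "in_closed_surface F \<longleftrightarrow> (\<forall>a. a \<noteq> 0 \<longrightarrow> rl F a = 1)"

end

theory Submission
  imports Defs "HOL-Computational_Algebra.Polynomial" "HOL-Number_Theory.Cong"
begin

text \<open>For a proper divisor d of m with d > 1, the subfield GF(2^d) = {x. x^(2^d) = x} of
 GF(2^m) contains 1 and is closed under addition (Frobenius), under any power permutation
 F = x^t and hence, being finite, under F\<inverse>. So the rotation lines at 1 through points of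
 GF(2^d) - {0, 1} never leave GF(2^d); as GF(2^d) is a proper subset with at least four
 elements, there are at least two rotation lines at 1.\<close>

lemma of_nat_card_UNIV_eq_0: "of_nat (card (UNIV :: 'a::{ring_1,finite} set)) = (0::'a)"
proof -
  have "(\<Sum>x\<in>UNIV. x + 1) = (\<Sum>x\<in>UNIV. x :: 'a)"
    by (rule sum.reindex_bij_witness[of _ "\<lambda>y. y - 1" "\<lambda>x. x + 1"]) auto
  then show ?thesis
    by (simp add: sum.distrib)
qed

lemma CHAR_eq_if_card_prime_power:
  assumes "card (UNIV :: 'a::{field,finite} set) = p ^ m" "prime p"
  shows "CHAR('a) = p"
proof -
  have "prime CHAR('a)"
    by (intro prime_CHAR_semidom finite_imp_CHAR_pos) simp
  moreover have "CHAR('a) dvd p ^ m"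
    using of_nat_card_UNIV_eq_0[where 'a='a] assms(1) of_nat_eq_0_iff_char_dvd by metis
  ultimately have "CHAR('a) dvd p"
    by (rule prime_dvd_power)
  with \<open>prime CHAR('a)\<close> assms(2) show ?thesis
    by (rule primes_dvd_imp_eq)
qed

lemma power_card_minus_one_eq_one:
  fixes x :: "'a::{field,finite}"
  assumes "x \<noteq> 0"
  shows "x ^ (card (UNIV :: 'a set) - 1) = 1"
proof -
  have card: "card (UNIV - {0::'a}) = card (UNIV :: 'a set) - 1"
    by (simp add: card_Diff_singleton)
  have "(\<Prod>y\<in>UNIV - {0}. x * y) = (\<Prod>y\<in>UNIV - {0::'a}. y)"
    by (rule prod.reindex_bij_witness[of _ "\<lambda>y. y / x" "\<lambda>y. x * y"]) (use assms in auto)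
  then have "x ^ (card (UNIV :: 'a set) - 1) * (\<Prod>y\<in>UNIV - {0::'a}. y)
      = 1 * (\<Prod>y\<in>UNIV - {0::'a}. y)"
    by (simp add: prod.distrib card)
  moreover have "(\<Prod>y\<in>UNIV - {0::'a}. y) \<noteq> 0"
    by simp
  ultimately show ?thesis
    by (metis mult_right_cancel)
qed

lemma card_power_eq_le:
  fixes c :: "'a::field"
  assumes "k > 0"
  shows "card {x. x ^ k = c} \<le> k"
proof -
  let ?p = "monom 1 k + [:- c:]"
  have "degree ?p = k"
    using assms by (simp add: degree_add_eq_left degree_monom_eq)
  moreover from this assms have "?p \<noteq> 0"
    by auto
  ultimately have "card {x. poly ?p x = 0} \<le> k"
    using card_poly_roots_bound by metis
  then show ?thesis
    by (simp add: poly_monom)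
qed

lemma power_minus_one_dvd_power_minus_one:
  fixes b :: nat
  assumes "b > 0" "d dvd m"
  shows "b ^ d - 1 dvd b ^ m - 1"
proof -
  obtain k where "m = d * k"
    using assms(2) by blast
  have "[b ^ d = 1] (mod b ^ d - 1)"
    using assms(1) by (simp add: cong_altdef_nat)
  then have "[(b ^ d) ^ k = 1] (mod b ^ d - 1)"
    using cong_pow by fastforce
  then show ?thesis
    using \<open>m = d * k\<close> cong_to_1_nat by (simp add: power_mult)
qed

lemma card_le_card_image_mult:
  assumes "finite A" "\<And>y. y \<in> f ` A \<Longrightarrow> card {x \<in> A. f x = y} \<le> k"
  shows "card A \<le> card (f ` A) * k"
proof -
  have "card A = card (\<Union>y\<in>f ` A. {x \<in> A. f x = y})"
    by (rule arg_cong[of _ _ card]) auto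
  also have "\<dots> = (\<Sum>y\<in>f ` A. card {x \<in> A. f x = y})"
    by (rule card_UN_disjoint) (use assms(1) in auto)
  also have "\<dots> \<le> card (f ` A) * k"
    using sum_bounded_above[of "f ` A" _ k] assms(2) by simp
  finally show ?thesis .
qed

lemma card_UNIV_field_ge_two: "card (UNIV :: 'a::{field,finite} set) \<ge> 2"
  using card_mono[of UNIV "{0, 1 :: 'a}"] by simp

lemma card_roots_of_unity_eq:
  assumes "e dvd card (UNIV :: 'a::{field,finite} set) - 1"
  shows "card {x::'a. x ^ e = 1} = e"
proof (rule antisym)
  let ?U = "UNIV - {0::'a}" and ?H = "{x::'a. x ^ e = 1}"
  obtain f where ef: "card (UNIV :: 'a set) - 1 = e * f"
    using assms by (rule dvdE)
  moreover have "card (UNIV :: 'a set) - 1 > 0"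
    using card_UNIV_field_ge_two[where 'a='a] by simp
  ultimately have "e * f > 0"
    by simp
  then have "e > 0" "f > 0"
    by simp_all
  from \<open>e > 0\<close> show "card ?H \<le> e"
    by (rule card_power_eq_le)
  have "(\<lambda>x. x ^ e) ` ?U \<subseteq> {y. y ^ f = 1}"
  proof (intro image_subsetI CollectI)
    fix x :: 'a assume "x \<in> ?U"
    then have "x ^ (e * f) = 1"
      using power_card_minus_one_eq_one[of x] ef by simp
    then show "(x ^ e) ^ f = 1"
      by (simp add: power_mult)
  qed
  then have "card ((\<lambda>x. x ^ e) ` ?U) \<le> card {y::'a. y ^ f = 1}"
    by (rule card_mono[rotated]) simp
  with card_power_eq_le[OF \<open>f > 0\<close>] have image: "card ((\<lambda>x. x ^ e) ` ?U) \<le> f"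
    by (rule order_trans[rotated])
  have fibre: "card {x \<in> ?U. x ^ e = y} \<le> card ?H" if y: "y \<in> (\<lambda>x. x ^ e) ` ?U" for y
  proof -
    obtain x0 where x0: "x0 \<noteq> 0" "y = x0 ^ e"
      using y by blast
    have "{x \<in> ?U. x ^ e = y} \<subseteq> (\<lambda>h. x0 * h) ` ?H"
    proof
      fix x assume "x \<in> {x \<in> ?U. x ^ e = y}"
      then have "x = x0 * (x / x0)" "(x / x0) ^ e = 1"
        using x0 by (simp_all add: power_divide)
      then show "x \<in> (\<lambda>h. x0 * h) ` ?H"
        by (intro image_eqI[where x = "x / x0"]) simp_all
    qed
    then have "card {x \<in> ?U. x ^ e = y} \<le> card ((\<lambda>h. x0 * h) ` ?H)"
      by (intro card_mono) auto
    also have "\<dots> \<le> card ?H"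
      by (rule card_image_le) simp
    finally show ?thesis .
  qed
  have "e * f = card ?U"
    using ef by (simp add: card_Diff_singleton)
  also have "\<dots> \<le> card ((\<lambda>x. x ^ e) ` ?U) * card ?H"
    by (rule card_le_card_image_mult[OF _ fibre]) simp_all
  also have "\<dots> \<le> f * card ?H"
    using image by simp
  finally have "f * e \<le> f * card ?H"
    by (simp only: mult.commute)
  then show "e \<le> card ?H"
    using \<open>f > 0\<close> by simp
qed

lemma card_power_eq_self:
  assumes "k \<ge> 2" "k - 1 dvd card (UNIV :: 'a::{field,finite} set) - 1"
  shows "card {x::'a. x ^ k = x} = k"
proof -
  have "x ^ k = x * x ^ (k - 1)" for x :: 'a
    using assms(1) by (simp flip: power_Suc)
  then have "{x::'a. x ^ k = x} = insert 0 {x. x ^ (k - 1) = 1}"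
    by auto
  moreover have "0 \<notin> {x::'a. x ^ (k - 1) = 1}"
    using assms(1) by (simp add: power_0_left)
  ultimately show ?thesis
    using card_roots_of_unity_eq[OF assms(2)] assms(1) by simp
qed

lemma inj_power_if_coprime:
  assumes "t > 0" "coprime t (card (UNIV :: 'a::{field,finite} set) - 1)"
  shows "inj (\<lambda>x::'a. x ^ t)"
proof (rule injI)
  fix x y :: 'a
  assume eq: "x ^ t = y ^ t"
  show "x = y"
  proof (cases "x = 0 \<or> y = 0")
    case True
    then show ?thesis
      using eq assms(1) by (auto simp: power_0_left)
  next
    case False
    define n where "n = card (UNIV :: 'a set) - 1"
    define w where "w = x / y"
    have "gcd t n = 1"
      using assms(2) by (simp add: n_def)
    then obtain u v where uv: "t * u = n * v + 1"
      using bezout_nat[of t n] assms(1) by auto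
    have "w \<noteq> 0" "w ^ t = 1"
      using eq False by (simp_all add: w_def power_divide)
    have "w = (w ^ n) ^ v * w"
      using power_card_minus_one_eq_one[OF \<open>w \<noteq> 0\<close>] by (simp add: n_def)
    also have "\<dots> = (w ^ t) ^ u"
      by (simp only: uv power_add power_mult power_one_right flip: power_mult)
    finally show ?thesis
      using \<open>w ^ t = 1\<close> False by (simp add: w_def)
  qed
qed

lemma rot_step_Image_subset:
  fixes F :: "'a::field \<Rightarrow> 'a"
  assumes "inj F" "finite L" "F ` L \<subseteq> L" "a \<in> L"
    and add_closed: "\<And>x y. x \<in> L \<Longrightarrow> y \<in> L \<Longrightarrow> x + y \<in> L"
  shows "rot_step F a `` L \<subseteq> L"
proof -
  have "F ` L = L"
    using assms(1-3) by (simp add: endo_inj_surj inj_on_subset)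
  then have inv_closed: "inv F x \<in> L" if "x \<in> L" for x
    using that assms(1) by (metis imageE inv_f_f)
  show ?thesis
    unfolding rot_step_def using assms(3,4) add_closed inv_closed by blast
qed

lemma rl_ne_one_if_invariant_subset:
  assumes "rot_step F a `` L \<subseteq> L" "y \<in> punct a \<inter> L" "z \<in> punct a - L"
  shows "rl F a \<noteq> 1"
proof
  let ?R = "(rot_step F a)\<^sup>*"
  assume "rl F a = 1"
  then obtain C where "punct a // ?R = {C}"
    unfolding rl_def rotation_lines_def by (rule card_1_singletonE)
  moreover have "?R `` {y} \<in> punct a // ?R" "?R `` {z} \<in> punct a // ?R"
    using assms(2,3) by (auto intro: quotientI)
  ultimately have "z \<in> ?R `` {y}"
    by auto
  moreover have "?R `` L = L"
    using assms(1) by (rule Image_closed_trancl)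
  ultimately show False
    using assms(2,3) by blast
qed

lemma proper_divisor_if_not_prime:
  fixes m :: nat
  assumes "m \<ge> 2" "\<not> prime m"
  obtains d where "d dvd m" "1 < d" "d < m"
proof -
  obtain d where d: "d dvd m" "d \<noteq> 1" "d \<noteq> m"
    using assms unfolding prime_nat_iff by auto
  moreover have "d \<noteq> 0"
    using d(1) assms(1) by (cases "d = 0") simp_all
  moreover have "d \<le> m"
    using d(1) assms(1) by (simp add: dvd_imp_le)
  ultimately show ?thesis
    using that by simp
qed

lemma card_Frobenius_power_fixed:
  assumes "card (UNIV :: 'a::{field,finite} set) = p ^ m" "d dvd m" "p ^ d \<ge> 2"
  shows "card {x::'a. x ^ p ^ d = x} = p ^ d"
proof (rule card_power_eq_self)
  have "p > 0"
    using assms(3) by (cases "p = 0") (auto simp: power_0_left split: if_splits)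
  then show "p ^ d - 1 dvd card (UNIV :: 'a set) - 1"
    using power_minus_one_dvd_power_minus_one[OF _ assms(2)] assms(1) by simp
qed (rule assms(3))

lemma rot_step_power_Image_Frobenius_fixed:
  fixes t d :: nat
  assumes "prime CHAR('a::{field,finite})" "inj (\<lambda>x::'a. x ^ t)" "a ^ CHAR('a) ^ d = a"
  shows "rot_step (\<lambda>x::'a. x ^ t) a `` {x. x ^ CHAR('a) ^ d = x} \<subseteq> {x. x ^ CHAR('a) ^ d = x}"
    (is "_ `` ?L \<subseteq> ?L")
proof (rule rot_step_Image_subset)
  show "(\<lambda>x. x ^ t) ` ?L \<subseteq> ?L"
    by (auto simp flip: power_mult simp: mult.commute[of t] power_mult)
  show "x + y \<in> ?L" if "x \<in> ?L" "y \<in> ?L" for x y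
    using that freshmans_dream'[OF assms(1) refl, of x y d] by simp
qed (use assms in simp_all)

lemma rl_power_ne_one_if_proper_subfield:
  fixes t :: nat
  assumes "card (UNIV :: 'a::{field,finite} set) = p ^ m" "prime p"
    and "d dvd m" "d < m" "p ^ d > 2" "inj (\<lambda>x::'a. x ^ t)"
  shows "rl (\<lambda>x::'a. x ^ t) 1 \<noteq> 1"
proof -
  let ?L = "{x::'a. x ^ p ^ d = x}"
  have card_L: "card ?L = p ^ d"
    using assms(1,3,5) by (intro card_Frobenius_power_fixed) simp_all
  have "CHAR('a) = p"
    using assms(1,2) by (rule CHAR_eq_if_card_prime_power)
  then have "rot_step (\<lambda>x::'a. x ^ t) 1 `` ?L \<subseteq> ?L"
    using rot_step_power_Image_Frobenius_fixed[where 'a = 'a and d = d and t = t and a = 1] assms(2,6) by simp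
  moreover obtain y where "y \<in> punct 1 \<inter> ?L"
  proof -
    have "card ?L > card {0, 1::'a}"
      using card_L assms(5) by simp
    then have "\<not> ?L \<subseteq> {0, 1}"
      using card_mono[of "{0, 1}" ?L] by (meson finite.emptyI finite_insert leD)
    with that show ?thesis
      unfolding punct_def by blast
  qed
  moreover obtain z where "z \<in> punct 1 - ?L"
  proof -
    have "p ^ d < p ^ m"
      using assms(4) prime_gt_1_nat[OF assms(2)] by (rule power_strict_increasing)
    then have "card ?L \<noteq> card (UNIV :: 'a set)"
      using card_L assms(1) by simp
    then have "?L \<noteq> UNIV"
      by auto
    moreover have "0 \<in> ?L" "1 \<in> ?L"
      using prime_gt_0_nat[OF assms(2)] by (simp_all add: power_0_left)
    ultimately show ?thesis
      using that unfolding punct_def by blast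
  qed
  ultimately show ?thesis
    by (rule rl_ne_one_if_invariant_subset)
qed

theorem mainTheorem8:
  fixes m :: nat
  assumes "card (UNIV :: 'a::{field,finite} set) = 2 ^ m"
    and "m \<ge> 2"
    and "\<not> prime m"
  shows "\<not> (\<exists>t::nat. coprime t (2 ^ m - 1) \<and> in_closed_surface (\<lambda>x::'a. x ^ t))"
proof
  assume "\<exists>t::nat. coprime t (2 ^ m - 1) \<and> in_closed_surface (\<lambda>x::'a. x ^ t)"
  then obtain t where coprime: "coprime t (2 ^ m - 1)"
    and surface: "in_closed_surface (\<lambda>x::'a. x ^ t)"
    by blast
  obtain d where "d dvd m" "1 < d" "d < m"
    using assms(2,3) by (rule proper_divisor_if_not_prime)
  have "(2::nat) ^ d > 2"
    using power_strict_increasing[of 1 d "2::nat"] \<open>1 < d\<close> by simp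
  moreover have "(2::nat) ^ d < 2 ^ m"
    using \<open>d < m\<close> by simp
  ultimately have "(2::nat) ^ m - 1 \<noteq> 1"
    by linarith
  with coprime have "t > 0"
    by (cases "t = 0") auto
  then have "inj (\<lambda>x::'a. x ^ t)"
    using coprime assms(1) by (intro inj_power_if_coprime) simp_all
  then have "rl (\<lambda>x::'a. x ^ t) 1 \<noteq> 1"
    using assms(1) \<open>d dvd m\<close> \<open>d < m\<close> \<open>2 ^ d > 2\<close>
    by (intro rl_power_ne_one_if_proper_subfield[where p = 2 and m = m]) simp_all
  with surface show False
    unfolding in_closed_surface_def by simp
qed

end
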